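(* Let $A,B,C$ be finite-dimensional quantum systems, $C'$ a copy of $C$, and let $\Lambda^{C\to AB}$ be a channel extension of a channel $\Lambda^{C\to B}$. Then $\Lambda^{C\to AB}$ is an incoherent extension of $\Lambda^{C\to B}$ if and only if the Choi–Jamiołkowski state $J_{C'AB}(\Lambda^{C\to AB})$ is separable with respect to the bipartition $A : BC'$.
   Context: A channel extension of $\Lambda^{C\to B}$ is a channel (completely positive trace-preserving map) $\Lambda^{C\to AB}$ with $\mathrm{Tr}_A\circ\Lambda^{C\to AB}=\Lambda^{C\to B}$. An instrument is a collection $\{\Lambda_\lambda\}_\lambda$ of completely positive maps whose sum is a channel. The extension is incoherent if there exist an instrument $\{\Lambda^{C\to B}_\lambda\}_\lambda$ and unit-trace density operators $\{\sigma^A_\lambda\}_\lambda$ such that $\Lambda^{C\to AB}[X]=\sum_\lambda\Lambda^{C\to B}_\lambda[X]\otimes\sigma^A_\lambda$ for all $X$. The Choi–Jamiołkowski operator of a map $\Gamma^{C\to Y}$ is $J_{C'Y}(\Gamma)=(\mathrm{id}_{C'}\otimes\Gamma)[\psi_+^{CC'}]$, where $\psi_+^{CC'}$ is a fixed maximally entangled pure state of $C$ and $C'$. A state on $A\otimes(BC')$ is $A:BC'$-separable if it is a convex combination of product states $\tau^A\otimes\omega^{BC'}$. *)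

theory Defs
  imports Complex_Main "Jordan_Normal_Form.Matrix"
begin

text \<open>Finite-dimensional quantum systems are modelled by their dimensions; operators
on a system of dimension d are complex d x d matrices (type complex mat).
Composite systems use the Kronecker ordering: index of (i,j) in dim d1*d2 is i*d2+j.\<close>

definition kron :: "complex mat \<Rightarrow> complex mat \<Rightarrow> complex mat" where
  "kron M N = mat (dim_row M * dim_row N) (dim_col M * dim_col N)
     (\<lambda>(i,j). M $$ (i div dim_row N, j div dim_col N) * N $$ (i mod dim_row N, j mod dim_col N))"

definition psd :: "nat \<Rightarrow> complex mat \<Rightarrow> bool" where
  "psd d M \<longleftrightarrow> M \<in> carrier_mat d d \<and>
     (\<forall>v \<in> carrier_vec d. let q = (\<Sum>i<d. cnj (v $ i) * (M *\<^sub>v v) $ i) in Im q = 0 \<and> Re q \<ge> 0)"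

definition mtrace :: "complex mat \<Rightarrow> complex" where
  "mtrace M = (\<Sum>i<dim_row M. M $$ (i, i))"

definition density :: "nat \<Rightarrow> complex mat \<Rightarrow> bool" where
  "density d \<rho> \<longleftrightarrow> psd d \<rho> \<and> mtrace \<rho> = 1"

definition msum :: "nat \<Rightarrow> nat \<Rightarrow> ('l \<Rightarrow> complex mat) \<Rightarrow> 'l set \<Rightarrow> complex mat" where
  "msum r c f L = mat r c (\<lambda>ij. \<Sum>l\<in>L. f l $$ ij)"

definition lin_map :: "nat \<Rightarrow> nat \<Rightarrow> (complex mat \<Rightarrow> complex mat) \<Rightarrow> bool" where
  "lin_map dX dY \<Gamma> \<longleftrightarrow>
     (\<forall>X \<in> carrier_mat dX dX. \<Gamma> X \<in> carrier_mat dY dY) \<and>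
     (\<forall>X \<in> carrier_mat dX dX. \<forall>Y \<in> carrier_mat dX dX. \<Gamma> (X + Y) = \<Gamma> X + \<Gamma> Y) \<and>
     (\<forall>X \<in> carrier_mat dX dX. \<forall>c. \<Gamma> (c \<cdot>\<^sub>m X) = c \<cdot>\<^sub>m \<Gamma> X)"

text \<open>(id_n \<otimes> \<Gamma>) applied to an operator on an n*dX-dimensional system (id factor first):
  block (p,q) of the result is \<Gamma> applied to block (p,q) of the input.\<close>
definition blk :: "nat \<Rightarrow> complex mat \<Rightarrow> nat \<Rightarrow> nat \<Rightarrow> complex mat" where
  "blk dX X p q = mat dX dX (\<lambda>(i,j). X $$ (p * dX + i, q * dX + j))"

definition id_tensor :: "nat \<Rightarrow> nat \<Rightarrow> nat \<Rightarrow> (complex mat \<Rightarrow> complex mat) \<Rightarrow> complex mat \<Rightarrow> complex mat" where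
  "id_tensor n dX dY \<Gamma> X = mat (n * dY) (n * dY)
     (\<lambda>(r,s). \<Gamma> (blk dX X (r div dY) (s div dY)) $$ (r mod dY, s mod dY))"

definition completely_positive :: "nat \<Rightarrow> nat \<Rightarrow> (complex mat \<Rightarrow> complex mat) \<Rightarrow> bool" where
  "completely_positive dX dY \<Gamma> \<longleftrightarrow> lin_map dX dY \<Gamma> \<and>
     (\<forall>n>0. \<forall>X. psd (n * dX) X \<longrightarrow> psd (n * dY) (id_tensor n dX dY \<Gamma> X))"

definition channel :: "nat \<Rightarrow> nat \<Rightarrow> (complex mat \<Rightarrow> complex mat) \<Rightarrow> bool" where
  "channel dX dY \<Gamma> \<longleftrightarrow> completely_positive dX dY \<Gamma> \<and>
     (\<forall>X \<in> carrier_mat dX dX. mtrace (\<Gamma> X) = mtrace X)"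

definition ptrace_first :: "nat \<Rightarrow> nat \<Rightarrow> complex mat \<Rightarrow> complex mat" where
  "ptrace_first dA dB M = mat dB dB (\<lambda>(b,b'). \<Sum>a<dA. M $$ (a * dB + b, a * dB + b'))"

definition channel_extension ::
  "nat \<Rightarrow> nat \<Rightarrow> nat \<Rightarrow> (complex mat \<Rightarrow> complex mat) \<Rightarrow> (complex mat \<Rightarrow> complex mat) \<Rightarrow> bool" where
  "channel_extension dA dB dC \<Lambda>AB \<Lambda>B \<longleftrightarrow> channel dC (dA * dB) \<Lambda>AB \<and> channel dC dB \<Lambda>B \<and>
     (\<forall>X \<in> carrier_mat dC dC. ptrace_first dA dB (\<Lambda>AB X) = \<Lambda>B X)"

definition instrument :: "nat \<Rightarrow> nat \<Rightarrow> 'l set \<Rightarrow> ('l \<Rightarrow> complex mat \<Rightarrow> complex mat) \<Rightarrow> bool" where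
  "instrument dX dY L \<Lambda>s \<longleftrightarrow> finite L \<and> (\<forall>l\<in>L. completely_positive dX dY (\<Lambda>s l)) \<and>
     channel dX dY (\<lambda>X. msum dY dY (\<lambda>l. \<Lambda>s l X) L)"

definition incoherent_extension ::
  "nat \<Rightarrow> nat \<Rightarrow> nat \<Rightarrow> (complex mat \<Rightarrow> complex mat) \<Rightarrow> bool" where
  "incoherent_extension dA dB dC \<Lambda>AB \<longleftrightarrow>
     (\<exists>(L :: nat set) \<Lambda>s \<sigma>. instrument dC dB L \<Lambda>s \<and> (\<forall>l\<in>L. density dA (\<sigma> l)) \<and>
        (\<forall>X \<in> carrier_mat dC dC. \<Lambda>AB X = msum (dA * dB) (dA * dB) (\<lambda>l. kron (\<sigma> l) (\<Lambda>s l X)) L))"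

text \<open>Maximally entangled state psi_+ on C \<otimes> C' (dimension dC*dC), |psi+> = (1/sqrt dC) sum_i |i>|i>.\<close>
definition max_ent :: "nat \<Rightarrow> complex mat" where
  "max_ent d = mat (d * d) (d * d)
     (\<lambda>(r,s). if r div d = r mod d \<and> s div d = s mod d then 1 / of_nat d else 0)"

text \<open>Choi-Jamiolkowski operator J_{C'Y}(\<Gamma>) = (id_{C'} \<otimes> \<Gamma>)[psi_+], ordered C' then Y.\<close>
definition choi :: "nat \<Rightarrow> nat \<Rightarrow> (complex mat \<Rightarrow> complex mat) \<Rightarrow> complex mat" where
  "choi dC dY \<Gamma> = id_tensor dC dC dY \<Gamma> (max_ent dC)"

text \<open>Product operator tau^A \<otimes> omega^{BC'} written on the ordering C' \<otimes> A \<otimes> B;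
  omega is given on the ordering C' \<otimes> B (dimension dC*dB).\<close>
definition prod_A_BC :: "nat \<Rightarrow> nat \<Rightarrow> nat \<Rightarrow> complex mat \<Rightarrow> complex mat \<Rightarrow> complex mat" where
  "prod_A_BC dA dB dC \<tau> \<omega> = mat (dC * (dA * dB)) (dC * (dA * dB))
     (\<lambda>(r,s). let c = r div (dA * dB); a = (r mod (dA * dB)) div dB; b = r mod dB;
                 c' = s div (dA * dB); a' = (s mod (dA * dB)) div dB; b' = s mod dB
             in \<tau> $$ (a, a') * \<omega> $$ (c * dB + b, c' * dB + b'))"

definition separable_A_BC :: "nat \<Rightarrow> nat \<Rightarrow> nat \<Rightarrow> complex mat \<Rightarrow> bool" where
  "separable_A_BC dA dB dC \<rho> \<longleftrightarrow>
     (\<exists>(K :: nat set) p \<tau> \<omega>. finite K \<and> (\<forall>k\<in>K. p k \<ge> (0::real)) \<and> (\<Sum>k\<in>K. p k) = 1 \<and>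
        (\<forall>k\<in>K. density dA (\<tau> k) \<and> density (dC * dB) (\<omega> k)) \<and>
        \<rho> = msum (dC * (dA * dB)) (dC * (dA * dB))
               (\<lambda>k. complex_of_real (p k) \<cdot>\<^sub>m prod_A_BC dA dB dC (\<tau> k) (\<omega> k)) K)"

end

(* An incoherent extension X |-> sum_l sigma_l (x) Lambda_l X has Choi matrix
   sum_l sigma_l (x) J(Lambda_l): a combination of A:BC'-product operators with positive
   semidefinite second factors whose traces add up to 1, because the Lambda_l sum to a
   channel. Normalising these factors exhibits separability.

   Conversely, a linear map is recovered from its Choi matrix J by
   Lambda X = dC * sum_{c,c'} X_{cc'} J_{(c,.),(c',.)}.  Substituting a separable
   decomposition J = sum_k p_k tau_k (x) omega_k gives Lambda X = sum_k tau_k (x) Gamma_k X,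
   where Gamma_k is the map with Choi matrix p_k omega_k.  Each Gamma_k is completely
   positive since omega_k is positive semidefinite (a Gram factorisation of omega_k turns
   the quadratic forms of id (x) Gamma_k into sums of quadratic forms of the input), and
   tracing out A shows that sum_k Gamma_k is the channel Lambda^B. *)

theory Submission
  imports Defs
begin

lemma sum_mult_index: "(\<Sum>r<a * b. g r) = (\<Sum>i<a. \<Sum>j<b. g (i * b + j))" for a b :: nat
proof -
  have "(\<Sum>r<a * b. g r) = (\<Sum>i<a. sum g {i * b..<i * b + b})"
    using sum.nat_group[of g b a] by (simp add: lessThan_atLeast0)
  also have "\<dots> = (\<Sum>i<a. \<Sum>j<b. g (i * b + j))"
  proof (rule sum.cong[OF refl])
    fix i
    have "sum g {i * b..<i * b + b} = sum g {0 + i * b..<b + i * b}" by (simp add: add.commute)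
    also have "\<dots> = (\<Sum>j = 0..<b. g (j + i * b))" by (rule sum.shift_bounds_nat_ivl)
    finally show "sum g {i * b..<i * b + b} = (\<Sum>j<b. g (i * b + j))"
      by (simp add: atLeast0LessThan add.commute)
  qed
  finally show ?thesis .
qed

lemma mult_index_less: "i < n \<Longrightarrow> a < d \<Longrightarrow> i * d + a < n * d" for i n a d :: nat
proof -
  assume "i < n" "a < d"
  hence "i * d + a < Suc i * d" by simp
  also have "\<dots> \<le> n * d" using \<open>i < n\<close> by (intro mult_le_mono1) simp
  finally show ?thesis .
qed

lemma mult_index_cases:
  fixes r n d :: nat
  assumes "r < n * d"
  obtains i a where "i < n" "a < d" "r = i * d + a"
proof
  show "r div d < n" using assms by (simp add: less_mult_imp_div_less)
  show "r mod d < d" using assms by (metis mod_less_divisor mult_0_right not_gr0 not_less_zero)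
qed simp

lemma sum_single_support:
  assumes "i < d" "\<And>a. a \<noteq> i \<Longrightarrow> g a = 0"
  shows "(\<Sum>a<(d::nat). g a) = g i"
proof -
  have "(\<Sum>a<d. g a) = (\<Sum>a\<in>{i}. g a)"
    by (rule sum.mono_neutral_right) (use assms in auto)
  thus ?thesis by simp
qed

lemma sum_pair_support:
  assumes "i < d" "j < d" "i \<noteq> j" "\<And>a. a \<noteq> i \<Longrightarrow> a \<noteq> j \<Longrightarrow> g a = 0"
  shows "(\<Sum>a<(d::nat). g a) = g i + g j"
proof -
  have "(\<Sum>a<d. g a) = (\<Sum>a\<in>{i, j}. g a)"
    by (rule sum.mono_neutral_right) (use assms in auto)
  thus ?thesis using assms by simp
qed

definition quad_form :: "nat \<Rightarrow> (nat \<Rightarrow> nat \<Rightarrow> complex) \<Rightarrow> (nat \<Rightarrow> complex) \<Rightarrow> complex" where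
  "quad_form d W f = (\<Sum>i<d. \<Sum>j<d. cnj (f i) * W i j * f j)"

definition sesq_form ::
  "nat \<Rightarrow> (nat \<Rightarrow> nat \<Rightarrow> complex) \<Rightarrow> (nat \<Rightarrow> complex) \<Rightarrow> (nat \<Rightarrow> complex) \<Rightarrow> complex" where
  "sesq_form d W u v = (\<Sum>i<d. \<Sum>j<d. cnj (u i) * W i j * v j)"

text \<open>On \<^typ>\<open>complex\<close>, \<open>0 \<le> z\<close> (HOL-Library.Complex_Order) means that z is real and nonnegative.\<close>

definition psd_kernel :: "nat \<Rightarrow> (nat \<Rightarrow> nat \<Rightarrow> complex) \<Rightarrow> bool" where
  "psd_kernel d W \<longleftrightarrow> (\<forall>f. quad_form d W f \<ge> 0)"

lemma psd_iff_psd_kernel: "psd d M \<longleftrightarrow> M \<in> carrier_mat d d \<and> psd_kernel d (\<lambda>i j. M $$ (i, j))"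
proof -
  have quad: "(\<Sum>i<d. cnj (v $ i) * (M *\<^sub>v v) $ i) = quad_form d (\<lambda>i j. M $$ (i, j)) (\<lambda>i. v $ i)"
    if "M \<in> carrier_mat d d" "v \<in> carrier_vec d" for v
    using that unfolding quad_form_def
    by (intro sum.cong refl)
      (auto simp: mult_mat_vec_def scalar_prod_def sum_distrib_left mult.assoc intro!: sum.cong)
  have restrict: "quad_form d W f = quad_form d W (\<lambda>i. vec d f $ i)" for W f
    unfolding quad_form_def by (intro sum.cong refl) auto
  have nonneg: "(Im q = 0 \<and> Re q \<ge> 0) \<longleftrightarrow> q \<ge> 0" for q :: complex
    by (auto simp: less_eq_complex_def)
  show ?thesis
  proof
    assume "psd d M"
    hence M: "M \<in> carrier_mat d d" and h: "\<forall>v\<in>carrier_vec d. (\<Sum>i<d. cnj (v $ i) * (M *\<^sub>v v) $ i) \<ge> 0"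
      unfolding psd_def Let_def nonneg by auto
    have "quad_form d (\<lambda>i j. M $$ (i, j)) f \<ge> 0" for f
      using h[rule_format, of "vec d f"] quad[OF M, of "vec d f"] restrict[of _ f] by simp
    with M show "M \<in> carrier_mat d d \<and> psd_kernel d (\<lambda>i j. M $$ (i, j))"
      unfolding psd_kernel_def by blast
  next
    assume "M \<in> carrier_mat d d \<and> psd_kernel d (\<lambda>i j. M $$ (i, j))"
    thus "psd d M" unfolding psd_def Let_def nonneg psd_kernel_def using quad by auto
  qed
qed

lemma quad_form_single:
  assumes "i < d"
  shows "quad_form d W (\<lambda>k. if k = i then x else 0) = cnj x * W i i * x"
proof -
  let ?f = "\<lambda>k. if k = i then x else 0"
  have inner: "(\<Sum>b<d. cnj (?f a) * W a b * ?f b) = cnj (?f a) * W a i * x" for a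
    by (subst sum_single_support[OF assms]) auto
  show ?thesis unfolding quad_form_def inner
    by (subst sum_single_support[OF assms]) auto
qed

lemma quad_form_pair:
  assumes "i < d" "j < d" "i \<noteq> j"
  shows "quad_form d W (\<lambda>k. if k = i then x else if k = j then y else 0) =
    cnj x * W i i * x + cnj x * W i j * y + cnj y * W j i * x + cnj y * W j j * y"
proof -
  let ?f = "\<lambda>k. if k = i then x else if k = j then y else 0"
  have inner: "(\<Sum>b<d. cnj (?f a) * W a b * ?f b) = cnj (?f a) * W a i * x + cnj (?f a) * W a j * y" for a
    by (subst sum_pair_support[OF assms]) (use assms in auto)
  show ?thesis unfolding quad_form_def inner
    by (subst sum_pair_support[OF assms]) (use assms in auto)
qed

lemma quad_form_add:
  "quad_form d W (\<lambda>k. f k + h k) = quad_form d W f + sesq_form d W f h + sesq_form d W h f + quad_form d W h"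
  unfolding quad_form_def sesq_form_def by (simp add: algebra_simps sum.distrib)

lemma sesq_form_single_right:
  "m < d \<Longrightarrow> sesq_form d W f (\<lambda>k. if k = m then t else 0) = t * (\<Sum>i<d. cnj (f i) * W i m)"
  unfolding sesq_form_def sum_distrib_left
  by (intro sum.cong refl, subst sum_single_support[of m]) (auto simp: algebra_simps)

lemma sesq_form_single_left:
  "m < d \<Longrightarrow> sesq_form d W (\<lambda>k. if k = m then t else 0) f = cnj t * (\<Sum>j<d. W m j * f j)"
  unfolding sesq_form_def sum_distrib_left
  by (subst sum_single_support[of m]) (auto simp: algebra_simps)

lemma psd_kernel_diag_nonneg: "psd_kernel d W \<Longrightarrow> i < d \<Longrightarrow> W i i \<ge> 0"
  using quad_form_single[of i d W 1] unfolding psd_kernel_def by (metis mult_1 mult_1_right complex_cnj_one)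

lemma psd_kernel_diag_real: "psd_kernel d W \<Longrightarrow> i < d \<Longrightarrow> W i i = complex_of_real (Re (W i i))"
  using psd_kernel_diag_nonneg by (fastforce simp: complex_eq_iff less_eq_complex_def)

lemma psd_kernel_hermitian:
  assumes W: "psd_kernel d W" and ij: "i < d" "j < d"
  shows "W j i = cnj (W i j)"
proof (cases "i = j")
  case True
  thus ?thesis using psd_kernel_diag_real[OF W ij(1)] by (metis complex_cnj_complex_of_real)
next
  case False
  have real: "Im (quad_form d W f) = 0" for f
    using W unfolding psd_kernel_def less_eq_complex_def by simp
  have "Im (W i i) = 0" "Im (W j j) = 0"
    using psd_kernel_diag_nonneg[OF W] ij by (simp_all add: less_eq_complex_def)
  with real[of "\<lambda>k. if k = i then 1 else if k = j then 1 else 0"]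
    real[of "\<lambda>k. if k = i then 1 else if k = j then \<i> else 0"]
  show ?thesis unfolding quad_form_pair[OF ij False] by (simp add: complex_eq_iff)
qed

lemma psd_kernel_zero_diag_row:
  assumes W: "psd_kernel d W" and mj: "m < d" "j < d" and zero: "W m m = 0"
  shows "W m j = 0"
proof (cases "m = j")
  case True
  thus ?thesis using zero by simp
next
  case False
  have herm: "W j m = cnj (W m j)" using psd_kernel_hermitian[OF W mj] .
  have djj: "Im (W j j) = 0" using psd_kernel_diag_nonneg[OF W mj(2)] by (simp add: less_eq_complex_def)
  have "Re (quad_form d W (\<lambda>k. if k = m then - complex_of_real t * W m j else if k = j then 1 else 0)) \<ge> 0" for t
    using W unfolding psd_kernel_def less_eq_complex_def by simp
  hence ineq: "- 2 * t * ((Re (W m j))\<^sup>2 + (Im (W m j))\<^sup>2) + Re (W j j) \<ge> 0" for t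
    unfolding quad_form_pair[OF mj False] herm zero
    using djj by (simp add: algebra_simps power2_eq_square)
  have pos: "(Re (W m j))\<^sup>2 + (Im (W m j))\<^sup>2 > 0" if "W m j \<noteq> 0"
    using that by (simp add: complex_eq_iff sum_power2_gt_zero_iff)
  show ?thesis
    using pos ineq[of "(Re (W j j) + 1) / (2 * ((Re (W m j))\<^sup>2 + (Im (W m j))\<^sup>2))"]
    by (cases "W m j = 0") (auto simp: field_simps)
qed

lemma psd_kernel_subtract_column:
  assumes W: "psd_kernel d W" and m: "m < d" and pos: "Re (W m m) > 0"
  defines "g \<equiv> \<lambda>j. W j m / complex_of_real (sqrt (Re (W m m)))"
  shows "psd_kernel d (\<lambda>i j. W i j - g i * cnj (g j))"
  unfolding psd_kernel_def
proof
  fix f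
  define R where "R = Re (W m m)"
  have WR: "W m m = complex_of_real R" using psd_kernel_diag_real[OF W m] unfolding R_def .
  have R: "R > 0" using pos R_def by auto
  define s where "s = (\<Sum>j<d. W m j * f j)"
  have cs: "(\<Sum>i<d. cnj (f i) * W i m) = cnj s"
    unfolding s_def by (simp add: psd_kernel_hermitian[OF W m] mult.commute)
  define t where "t = - s / complex_of_real R"
  have "0 \<le> quad_form d W (\<lambda>k. f k + (if k = m then t else 0))" using W unfolding psd_kernel_def by blast
  also have "quad_form d W (\<lambda>k. f k + (if k = m then t else 0)) = quad_form d W f - cnj s * s / complex_of_real R"
    unfolding quad_form_add sesq_form_single_right[OF m] sesq_form_single_left[OF m] quad_form_single[OF m]
      cs s_def[symmetric] WR t_def
    using R by (simp add: field_simps)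
  finally have h: "0 \<le> quad_form d W f - cnj s * s / complex_of_real R" .
  have gsum: "(\<Sum>j<d. cnj (g j) * f j) = s / complex_of_real (sqrt R)"
    unfolding g_def s_def R_def[symmetric] using psd_kernel_hermitian[OF W m]
    by (simp add: sum_divide_distrib)
  have gsum': "(\<Sum>i<d. cnj (f i) * g i) = cnj s / complex_of_real (sqrt R)"
    using arg_cong[OF gsum, of cnj] by (simp add: mult.commute)
  have "quad_form d (\<lambda>i j. W i j - g i * cnj (g j)) f
      = quad_form d W f - (\<Sum>i<d. cnj (f i) * g i) * (\<Sum>j<d. cnj (g j) * f j)"
    unfolding quad_form_def by (simp add: algebra_simps sum_subtractf sum_distrib_left sum_distrib_right)
  also have "\<dots> = quad_form d W f - cnj s * s / complex_of_real R"
    unfolding gsum gsum' using R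
    by (simp add: field_simps)
      (metis of_real_mult real_sqrt_mult_self less_imp_le real_sqrt_pow2 power2_eq_square)
  finally show "0 \<le> quad_form d (\<lambda>i j. W i j - g i * cnj (g j)) f" using h by simp
qed

text \<open>One step of a Cholesky-type elimination: a zero diagonal entry forces its row to vanish,
  otherwise the rank-one part carried by column m is split off.\<close>

lemma psd_kernel_rank_one_split:
  assumes W: "psd_kernel d W" and m: "m < d"
    and Z: "\<forall>i j. i < d \<longrightarrow> j < d \<longrightarrow> (i < m \<or> j < m) \<longrightarrow> W i j = 0"
  obtains W' g where "psd_kernel d W'"
    and "\<forall>i j. i < d \<longrightarrow> j < d \<longrightarrow> (i < Suc m \<or> j < Suc m) \<longrightarrow> W' i j = 0"
    and "\<And>i j. W i j = g i * cnj (g j) + W' i j"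
proof (cases "Re (W m m) > 0")
  case False
  have "W m m = 0"
    using False psd_kernel_diag_nonneg[OF W m] by (simp add: less_eq_complex_def complex_eq_iff)
  hence row: "W m j = 0" if "j < d" for j using psd_kernel_zero_diag_row[OF W m that] by blast
  have col: "W j m = 0" if "j < d" for j using psd_kernel_hermitian[OF W m that] row[OF that] by simp
  show ?thesis
    by (rule that[of W "\<lambda>_. 0"]) (use W Z row col in \<open>auto simp: less_Suc_eq\<close>)
next
  case True
  define r where "r = complex_of_real (sqrt (Re (W m m)))"
  define g where "g = (\<lambda>j. W j m / r)"
  have rr: "r * r = W m m"
  proof -
    have "r * r = complex_of_real (Re (W m m))"
      unfolding r_def of_real_mult[symmetric] using True by simp
    thus ?thesis using psd_kernel_diag_real[OF W m] by simp
  qed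
  have r: "r \<noteq> 0" "cnj r = r" using True unfolding r_def by auto
  have Wmm: "W m m \<noteq> 0" using rr r by auto
  have gm: "g m * cnj (g j) = W m j" if "j < d" for j
  proof -
    have "cnj (W j m) = W m j" using psd_kernel_hermitian[OF W that m] by simp
    thus ?thesis using rr r Wmm unfolding g_def by (simp add: field_simps)
  qed
  have mg: "g j * cnj (g m) = W j m" for j
  proof -
    have "cnj (W m m) = W m m" using psd_kernel_hermitian[OF W m m] by simp
    thus ?thesis using rr r Wmm unfolding g_def by (simp add: field_simps)
  qed
  have g0: "g i = 0" if "i < m" for i using Z that m unfolding g_def by auto
  show ?thesis
  proof (rule that[of "\<lambda>i j. W i j - g i * cnj (g j)" g])
    show "psd_kernel d (\<lambda>i j. W i j - g i * cnj (g j))"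
      unfolding g_def r_def by (rule psd_kernel_subtract_column[OF W m True])
    show "\<forall>i j. i < d \<longrightarrow> j < d \<longrightarrow> (i < Suc m \<or> j < Suc m) \<longrightarrow> W i j - g i * cnj (g j) = 0"
      using Z g0 gm mg by (auto simp: less_Suc_eq)
  qed simp
qed

lemma psd_kernel_gram_from:
  assumes "m \<le> d" "psd_kernel d W" "\<forall>i j. i < d \<longrightarrow> j < d \<longrightarrow> (i < m \<or> j < m) \<longrightarrow> W i j = 0"
  shows "\<exists>F. \<forall>i<d. \<forall>j<d. W i j = (\<Sum>k\<in>{m..<d}. F k i * cnj (F k j))"
  using assms
proof (induction m arbitrary: W rule: inc_induct)
  case base
  thus ?case by auto
next
  case (step m)
  obtain W' g where W': "psd_kernel d W'"
    "\<forall>i j. i < d \<longrightarrow> j < d \<longrightarrow> (i < Suc m \<or> j < Suc m) \<longrightarrow> W' i j = 0"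
    and split: "\<And>i j. W i j = g i * cnj (g j) + W' i j"
    using psd_kernel_rank_one_split[OF step.prems(1) step.hyps(2) step.prems(2)] by metis
  obtain F where F: "\<forall>i<d. \<forall>j<d. W' i j = (\<Sum>k\<in>{Suc m..<d}. F k i * cnj (F k j))"
    using step.IH[OF W'] by blast
  have tail: "(\<Sum>k\<in>{m..<d}. (F(m := g)) k i * cnj ((F(m := g)) k j))
      = g i * cnj (g j) + (\<Sum>k\<in>{Suc m..<d}. F k i * cnj (F k j))" for i j
    using step.hyps(2) by (simp add: sum.atLeast_Suc_lessThan)
  show ?case
  proof (intro exI allI impI)
    fix i j assume "i < d" "j < d"
    thus "W i j = (\<Sum>k\<in>{m..<d}. (F(m := g)) k i * cnj ((F(m := g)) k j))"
      unfolding tail split[of i j] using F by simp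
  qed
qed

lemma psd_kernel_gram: "psd_kernel d W \<Longrightarrow> \<exists>F. \<forall>i<d. \<forall>j<d. W i j = (\<Sum>k<d. F k i * cnj (F k j))"
  using psd_kernel_gram_from[of 0 d W] by (simp add: atLeast0LessThan)

lemma msum_carrier [simp]: "msum r c f L \<in> carrier_mat r c"
  unfolding msum_def by simp

lemma msum_dims [simp]: "dim_row (msum r c f L) = r" "dim_col (msum r c f L) = c"
  unfolding msum_def by simp_all

lemma msum_index [simp]: "i < r \<Longrightarrow> j < c \<Longrightarrow> msum r c f L $$ (i, j) = (\<Sum>l\<in>L. f l $$ (i, j))"
  unfolding msum_def by simp

lemma mtrace_msum:
  assumes "\<And>l. l \<in> L \<Longrightarrow> f l \<in> carrier_mat d d"
  shows "mtrace (msum d d f L) = (\<Sum>l\<in>L. mtrace (f l))"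
proof -
  have "mtrace (msum d d f L) = (\<Sum>i<d. \<Sum>l\<in>L. f l $$ (i, i))" unfolding mtrace_def by simp
  also have "\<dots> = (\<Sum>l\<in>L. \<Sum>i<d. f l $$ (i, i))" by (rule sum.swap)
  also have "\<dots> = (\<Sum>l\<in>L. mtrace (f l))" unfolding mtrace_def using assms by (intro sum.cong refl) auto
  finally show ?thesis .
qed

lemma mtrace_smult: "M \<in> carrier_mat d d \<Longrightarrow> mtrace (c \<cdot>\<^sub>m M) = c * mtrace M"
  unfolding mtrace_def by (simp add: sum_distrib_left)

lemma density_carrier: "density d M \<Longrightarrow> M \<in> carrier_mat d d"
  unfolding density_def psd_def by auto

lemma psd_smult:
  assumes "psd d M" "c \<ge> 0"
  shows "psd d (complex_of_real c \<cdot>\<^sub>m M)"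
proof -
  have M: "M \<in> carrier_mat d d" and W: "psd_kernel d (\<lambda>i j. M $$ (i, j))"
    using assms(1) unfolding psd_iff_psd_kernel by auto
  have "quad_form d (\<lambda>i j. (complex_of_real c \<cdot>\<^sub>m M) $$ (i, j)) f
      = complex_of_real c * quad_form d (\<lambda>i j. M $$ (i, j)) f" for f
    unfolding quad_form_def using M by (simp add: sum_distrib_left algebra_simps)
  moreover have "complex_of_real c \<ge> 0" using assms(2) by (simp add: less_eq_complex_def)
  ultimately show ?thesis
    using M W unfolding psd_iff_psd_kernel psd_kernel_def by (simp add: mult_nonneg_nonneg)
qed

lemma psd_mtrace_nonneg:
  assumes "psd d M"
  shows "mtrace M \<ge> 0"
proof -
  have "dim_row M = d" and W: "psd_kernel d (\<lambda>i j. M $$ (i, j))"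
    using assms unfolding psd_iff_psd_kernel by auto
  thus ?thesis unfolding mtrace_def by (auto intro: sum_nonneg psd_kernel_diag_nonneg[OF W])
qed

lemma psd_mtrace_zero:
  assumes "psd d M" "mtrace M = 0"
  shows "M = 0\<^sub>m d d"
proof -
  have M: "M \<in> carrier_mat d d" and W: "psd_kernel d (\<lambda>i j. M $$ (i, j))"
    using assms(1) unfolding psd_iff_psd_kernel by auto
  have "(\<Sum>i<d. M $$ (i, i)) = 0" using assms(2) M unfolding mtrace_def by simp
  hence diag: "M $$ (i, i) = 0" if "i < d" for i
    using sum_nonneg_eq_0_iff[of "{..<d}" "\<lambda>i. M $$ (i, i)"] psd_kernel_diag_nonneg[OF W] that by auto
  show ?thesis
    by (rule eq_matI) (use M psd_kernel_zero_diag_row[OF W _ _ diag] in auto)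
qed

lemma density_inverse_mtrace_smult:
  assumes J: "psd d J" and "mtrace J \<noteq> 0"
  shows "density d ((1 / mtrace J) \<cdot>\<^sub>m J)"
proof -
  have "mtrace J = complex_of_real (Re (mtrace J))" "Re (mtrace J) \<ge> 0"
    using psd_mtrace_nonneg[OF J] by (auto simp: less_eq_complex_def complex_eq_iff)
  hence "psd d ((1 / mtrace J) \<cdot>\<^sub>m J)"
    using psd_smult[OF J, of "1 / Re (mtrace J)"] by (metis divide_nonneg_nonneg of_real_1 of_real_divide zero_le_one)
  moreover have "mtrace ((1 / mtrace J) \<cdot>\<^sub>m J) = 1"
    using J assms(2) mtrace_smult[of J d] unfolding psd_def by simp
  ultimately show ?thesis unfolding density_def by simp
qed

lemma kron_index:
  assumes "M \<in> carrier_mat dA dA" "N \<in> carrier_mat dB dB" "y < dA * dB" "y' < dA * dB"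
  shows "kron M N $$ (y, y') = M $$ (y div dB, y' div dB) * N $$ (y mod dB, y' mod dB)"
  using assms unfolding kron_def by auto

definition mat_unit :: "nat \<Rightarrow> nat \<Rightarrow> nat \<Rightarrow> complex mat" where
  "mat_unit d i j = mat d d (\<lambda>(a, b). if a = i \<and> b = j then 1 else 0)"

lemma mat_unit_carrier [simp]: "mat_unit d i j \<in> carrier_mat d d"
  unfolding mat_unit_def by simp

lemma mat_eq_msum_mat_unit:
  assumes "X \<in> carrier_mat d d"
  shows "X = msum d d (\<lambda>p. X $$ p \<cdot>\<^sub>m mat_unit d (fst p) (snd p)) ({..<d} \<times> {..<d})"
proof (rule eq_matI)
  fix a b assume "a < dim_row (msum d d (\<lambda>p. X $$ p \<cdot>\<^sub>m mat_unit d (fst p) (snd p)) ({..<d} \<times> {..<d}))"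
    "b < dim_col (msum d d (\<lambda>p. X $$ p \<cdot>\<^sub>m mat_unit d (fst p) (snd p)) ({..<d} \<times> {..<d}))"
  hence ab: "a < d" "b < d" by auto
  have "msum d d (\<lambda>p. X $$ p \<cdot>\<^sub>m mat_unit d (fst p) (snd p)) ({..<d} \<times> {..<d}) $$ (a, b)
      = (\<Sum>p\<in>{..<d} \<times> {..<d}. (if p = (a, b) then X $$ (a, b) else 0))"
    unfolding msum_index[OF ab] using ab by (intro sum.cong refl) (auto simp: mat_unit_def)
  thus "X $$ (a, b) = msum d d (\<lambda>p. X $$ p \<cdot>\<^sub>m mat_unit d (fst p) (snd p)) ({..<d} \<times> {..<d}) $$ (a, b)"
    using ab by simp
qed (use assms in auto)

lemma lin_map_zero:
  assumes "lin_map dX dY \<Gamma>"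
  shows "\<Gamma> (0\<^sub>m dX dX) = 0\<^sub>m dY dY"
proof -
  have \<Gamma>0: "\<Gamma> (0\<^sub>m dX dX) \<in> carrier_mat dY dY" using assms unfolding lin_map_def by auto
  have "0 \<cdot>\<^sub>m 0\<^sub>m dX dX = (0\<^sub>m dX dX :: complex mat)" by (intro eq_matI) auto
  hence "\<Gamma> (0\<^sub>m dX dX) = 0 \<cdot>\<^sub>m \<Gamma> (0\<^sub>m dX dX)"
    using assms unfolding lin_map_def by (metis zero_carrier_mat)
  also have "\<dots> = 0\<^sub>m dY dY" using \<Gamma>0 by (intro eq_matI) auto
  finally show ?thesis .
qed

lemma lin_map_msum:
  assumes lin: "lin_map dX dY \<Gamma>" and "finite L" and "\<And>l. l \<in> L \<Longrightarrow> f l \<in> carrier_mat dX dX"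
  shows "\<Gamma> (msum dX dX f L) = msum dY dY (\<lambda>l. \<Gamma> (f l)) L"
  using assms(2,3)
proof (induction L rule: finite_induct)
  case empty
  have "msum dX dX f {} = 0\<^sub>m dX dX" "msum dY dY (\<lambda>l. \<Gamma> (f l)) {} = 0\<^sub>m dY dY"
    by (intro eq_matI; simp)+
  thus ?case using lin_map_zero[OF lin] by simp
next
  case (insert x F)
  have "msum dX dX f (insert x F) = f x + msum dX dX f F"
    using insert(1,2,4) by (intro eq_matI) auto
  moreover have "\<Gamma> (f x) \<in> carrier_mat dY dY" using lin insert(4) unfolding lin_map_def by auto
  hence "msum dY dY (\<lambda>l. \<Gamma> (f l)) (insert x F) = \<Gamma> (f x) + msum dY dY (\<lambda>l. \<Gamma> (f l)) F"
    using insert(1,2) by (intro eq_matI) auto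
  moreover have "\<Gamma> (f x + msum dX dX f F) = \<Gamma> (f x) + \<Gamma> (msum dX dX f F)"
    using lin insert(4) unfolding lin_map_def by auto
  ultimately show ?case using insert by simp
qed

lemma blk_carrier [simp]: "blk d X p q \<in> carrier_mat d d"
  unfolding blk_def by simp

lemma channel_cong:
  assumes eq: "\<And>X. X \<in> carrier_mat dX dX \<Longrightarrow> F X = G X" and "channel dX dY F"
  shows "channel dX dY G"
proof -
  have "id_tensor n dX dY F M = id_tensor n dX dY G M" for n M
    unfolding id_tensor_def using eq[OF blk_carrier] by simp
  moreover have "lin_map dX dY G" using assms unfolding channel_def completely_positive_def lin_map_def by auto
  ultimately show ?thesis using assms unfolding channel_def completely_positive_def by auto
qed

lemma blk_max_ent: "i < d \<Longrightarrow> j < d \<Longrightarrow> blk d (max_ent d) i j = (1 / of_nat d) \<cdot>\<^sub>m mat_unit d i j"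
  by (intro eq_matI) (auto simp: blk_def max_ent_def mat_unit_def mult_index_less)

lemma mtrace_blk_max_ent: "i < d \<Longrightarrow> mtrace (blk d (max_ent d) i i) = 1 / of_nat d"
  unfolding blk_max_ent mtrace_def mat_unit_def by (simp add: sum_single_support[of i])

lemma choi_index:
  assumes "c < dC" "c' < dC" "y < dY" "y' < dY"
  shows "choi dC dY \<Gamma> $$ (c * dY + y, c' * dY + y') = \<Gamma> (blk dC (max_ent dC) c c') $$ (y, y')"
  using assms unfolding choi_def id_tensor_def by (simp add: mult_index_less)

lemma cnj_mult_self_nonneg: "cnj z * z \<ge> 0"
  using conjugate_square_positive[of z] by (simp add: mult.commute)

lemma max_ent_psd: "psd (d * d) (max_ent d)"
proof -
  define a where "a = (\<lambda>r::nat. if r div d = r mod d then (1::complex) else 0)"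
  have ent: "max_ent d $$ (r, s) = a r * a s / of_nat d" if "r < d * d" "s < d * d" for r s
    using that unfolding max_ent_def a_def by auto
  have "quad_form (d * d) (\<lambda>i j. max_ent d $$ (i, j)) f \<ge> 0" for f
  proof -
    define S where "S = (\<Sum>s<d * d. a s * f s)"
    have "cnj (a r) = a r" for r unfolding a_def by auto
    hence "quad_form (d * d) (\<lambda>i j. max_ent d $$ (i, j)) f = complex_of_real (1 / real d) * (cnj S * S)"
      unfolding quad_form_def S_def
      by (simp add: ent sum_distrib_left sum_distrib_right algebra_simps)
    moreover have "complex_of_real (1 / real d) \<ge> 0" by (simp add: less_eq_complex_def)
    ultimately show ?thesis by (metis mult_nonneg_nonneg cnj_mult_self_nonneg)
  qed
  thus ?thesis unfolding psd_iff_psd_kernel psd_kernel_def max_ent_def by auto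
qed

lemma choi_psd: "completely_positive dC dY \<Gamma> \<Longrightarrow> dC > 0 \<Longrightarrow> psd (dC * dY) (choi dC dY \<Gamma>)"
  using max_ent_psd[of dC] unfolding completely_positive_def choi_def by blast

lemma mtrace_choi:
  assumes "lin_map dC dY \<Gamma>"
  shows "mtrace (choi dC dY \<Gamma>) = (\<Sum>c<dC. mtrace (\<Gamma> (blk dC (max_ent dC) c c)))"
proof -
  have dims: "dim_row (\<Gamma> (blk dC (max_ent dC) c c)) = dY" for c
    using assms unfolding lin_map_def by (metis blk_carrier carrier_matD(1))
  have "mtrace (choi dC dY \<Gamma>) = (\<Sum>r<dC * dY. choi dC dY \<Gamma> $$ (r, r))"
    unfolding mtrace_def choi_def id_tensor_def by simp
  also have "\<dots> = (\<Sum>c<dC. \<Sum>y<dY. choi dC dY \<Gamma> $$ (c * dY + y, c * dY + y))" by (rule sum_mult_index)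
  also have "\<dots> = (\<Sum>c<dC. mtrace (\<Gamma> (blk dC (max_ent dC) c c)))"
    unfolding mtrace_def dims by (intro sum.cong refl) (simp add: choi_index)
  finally show ?thesis .
qed

lemma lin_map_eq_choi_sum:
  assumes lin: "lin_map dC dY \<Gamma>" and X: "X \<in> carrier_mat dC dC" and yy: "y < dY" "y' < dY"
  shows "\<Gamma> X $$ (y, y') =
    (\<Sum>c<dC. \<Sum>c'<dC. X $$ (c, c') * of_nat dC * choi dC dY \<Gamma> $$ (c * dY + y, c' * dY + y'))"
proof -
  have unit: "\<Gamma> (X $$ (c, c') \<cdot>\<^sub>m mat_unit dC c c') $$ (y, y')
      = X $$ (c, c') * of_nat dC * choi dC dY \<Gamma> $$ (c * dY + y, c' * dY + y')"
    if cc: "c < dC" "c' < dC" for c c'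
  proof -
    have E: "\<Gamma> (mat_unit dC c c') \<in> carrier_mat dY dY" using lin unfolding lin_map_def by auto
    have "choi dC dY \<Gamma> $$ (c * dY + y, c' * dY + y') = ((1 / of_nat dC) \<cdot>\<^sub>m \<Gamma> (mat_unit dC c c')) $$ (y, y')"
      using choi_index[OF cc yy] blk_max_ent[OF cc] lin unfolding lin_map_def by auto
    moreover have "\<Gamma> (X $$ (c, c') \<cdot>\<^sub>m mat_unit dC c c') = X $$ (c, c') \<cdot>\<^sub>m \<Gamma> (mat_unit dC c c')"
      using lin unfolding lin_map_def by auto
    ultimately show ?thesis using E yy cc by simp
  qed
  have "\<Gamma> X = msum dY dY (\<lambda>p. \<Gamma> (X $$ p \<cdot>\<^sub>m mat_unit dC (fst p) (snd p))) ({..<dC} \<times> {..<dC})"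
    by (subst mat_eq_msum_mat_unit[OF X]) (rule lin_map_msum[OF lin]; auto)
  hence "\<Gamma> X $$ (y, y') = (\<Sum>c<dC. \<Sum>c'<dC. \<Gamma> (X $$ (c, c') \<cdot>\<^sub>m mat_unit dC c c') $$ (y, y'))"
    using yy by (simp add: sum.cartesian_product case_prod_unfold)
  thus ?thesis by (simp add: unit)
qed

text \<open>Up to the factor dC this inverts the Choi-Jamiolkowski map:
  \<open>choi dC dB (choi_map dC dB W) = (1 / dC) \<cdot>\<^sub>m W\<close>.\<close>

definition choi_map :: "nat \<Rightarrow> nat \<Rightarrow> complex mat \<Rightarrow> complex mat \<Rightarrow> complex mat" where
  "choi_map dC dB W X =
     mat dB dB (\<lambda>(b, b'). \<Sum>c<dC. \<Sum>c'<dC. X $$ (c, c') * W $$ (c * dB + b, c' * dB + b'))"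

lemma lin_map_choi_map: "lin_map dC dB (choi_map dC dB W)"
  unfolding lin_map_def
proof (intro conjI ballI allI)
  fix X Y :: "complex mat" assume "X \<in> carrier_mat dC dC" "Y \<in> carrier_mat dC dC"
  thus "choi_map dC dB W (X + Y) = choi_map dC dB W X + choi_map dC dB W Y"
    by (intro eq_matI) (auto simp: choi_map_def algebra_simps sum.distrib)
next
  fix X :: "complex mat" and a assume "X \<in> carrier_mat dC dC"
  thus "choi_map dC dB W (a \<cdot>\<^sub>m X) = a \<cdot>\<^sub>m choi_map dC dB W X"
    by (intro eq_matI) (auto simp: choi_map_def algebra_simps sum_distrib_left)
qed (simp add: choi_map_def)

lemma quad_form_id_tensor_choi_map:
  assumes F: "\<forall>i<dC * dB. \<forall>j<dC * dB. W $$ (i, j) = (\<Sum>k<dC * dB. F k i * cnj (F k j))"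
  shows "quad_form (n * dB) (\<lambda>i j. id_tensor n dC dB (choi_map dC dB W) X $$ (i, j)) f
    = (\<Sum>k<dC * dB. quad_form (n * dC) (\<lambda>i j. X $$ (i, j))
         (\<lambda>t. \<Sum>b<dB. f (t div dC * dB + b) * cnj (F k (t mod dC * dB + b))))"
proof -
  let ?M = "id_tensor n dC dB (choi_map dC dB W) X"
  define T where "T = (\<lambda>k p b q b' c c'. cnj (f (p * dB + b)) * X $$ (p * dC + c, q * dC + c') *
    F k (c * dB + b) * cnj (F k (c' * dB + b')) * f (q * dB + b'))"
  have ent: "?M $$ (p * dB + b, q * dB + b') = (\<Sum>c<dC. \<Sum>c'<dC. X $$ (p * dC + c, q * dC + c') *
      (\<Sum>k<dC * dB. F k (c * dB + b) * cnj (F k (c' * dB + b'))))"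
    if "p < n" "q < n" "b < dB" "b' < dB" for p q b b'
    using that by (auto simp: id_tensor_def mult_index_less choi_map_def blk_def F intro!: sum.cong)
  have "quad_form (n * dB) (\<lambda>i j. ?M $$ (i, j)) f
      = (\<Sum>p<n. \<Sum>b<dB. \<Sum>q<n. \<Sum>b'<dB. cnj (f (p * dB + b)) * ?M $$ (p * dB + b, q * dB + b') * f (q * dB + b'))"
    unfolding quad_form_def by (simp add: sum_mult_index)
  also have "\<dots> = (\<Sum>p<n. \<Sum>b<dB. \<Sum>q<n. \<Sum>b'<dB. cnj (f (p * dB + b)) *
      (\<Sum>c<dC. \<Sum>c'<dC. X $$ (p * dC + c, q * dC + c') *
        (\<Sum>k<dC * dB. F k (c * dB + b) * cnj (F k (c' * dB + b')))) * f (q * dB + b'))"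
    by (intro sum.cong refl) (simp add: ent)
  also have "\<dots> = (\<Sum>p<n. \<Sum>b<dB. \<Sum>q<n. \<Sum>b'<dB. \<Sum>c<dC. \<Sum>c'<dC. \<Sum>k<dC * dB. T k p b q b' c c')"
    unfolding T_def by (simp add: sum_distrib_left sum_distrib_right algebra_simps)
  also have "\<dots> = (\<Sum>k<dC * dB. \<Sum>p<n. \<Sum>c<dC. \<Sum>q<n. \<Sum>c'<dC. \<Sum>b<dB. \<Sum>b'<dB. T k p b q b' c c')"
    by (simp add: sum.cartesian_product,
        rule sum.reindex_bij_witness[where i = "\<lambda>(k, p, c, q, c', b, b'). (p, b, q, b', c, c', k)"
          and j = "\<lambda>(p, b, q, b', c, c', k). (k, p, c, q, c', b, b')"]) auto
  also have "\<dots> = (\<Sum>k<dC * dB. quad_form (n * dC) (\<lambda>i j. X $$ (i, j))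
         (\<lambda>t. \<Sum>b<dB. f (t div dC * dB + b) * cnj (F k (t mod dC * dB + b))))"
  proof (rule sum.cong[OF refl])
    fix k
    have "quad_form (n * dC) (\<lambda>i j. X $$ (i, j))
        (\<lambda>t. \<Sum>b<dB. f (t div dC * dB + b) * cnj (F k (t mod dC * dB + b)))
      = (\<Sum>p<n. \<Sum>c<dC. \<Sum>q<n. \<Sum>c'<dC.
          cnj (\<Sum>b<dB. f (p * dB + b) * cnj (F k (c * dB + b))) * X $$ (p * dC + c, q * dC + c') *
          (\<Sum>b'<dB. f (q * dB + b') * cnj (F k (c' * dB + b'))))"
      unfolding quad_form_def by (simp add: sum_mult_index)
    also have "\<dots> = (\<Sum>p<n. \<Sum>c<dC. \<Sum>q<n. \<Sum>c'<dC. \<Sum>b<dB. \<Sum>b'<dB. T k p b q b' c c')"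
      unfolding T_def by (simp add: sum_distrib_left sum_distrib_right algebra_simps)
    finally show "(\<Sum>p<n. \<Sum>c<dC. \<Sum>q<n. \<Sum>c'<dC. \<Sum>b<dB. \<Sum>b'<dB. T k p b q b' c c') =
      quad_form (n * dC) (\<lambda>i j. X $$ (i, j))
        (\<lambda>t. \<Sum>b<dB. f (t div dC * dB + b) * cnj (F k (t mod dC * dB + b)))" ..
  qed
  finally show ?thesis .
qed

lemma completely_positive_choi_map:
  assumes W: "psd (dC * dB) W"
  shows "completely_positive dC dB (choi_map dC dB W)"
  unfolding completely_positive_def
proof (intro conjI lin_map_choi_map allI impI)
  fix n X assume "psd (n * dC) X"
  hence X: "psd_kernel (n * dC) (\<lambda>i j. X $$ (i, j))" unfolding psd_iff_psd_kernel by simp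
  obtain F where "\<forall>i<dC * dB. \<forall>j<dC * dB. W $$ (i, j) = (\<Sum>k<dC * dB. F k i * cnj (F k j))"
    using W psd_kernel_gram unfolding psd_iff_psd_kernel by blast
  from quad_form_id_tensor_choi_map[OF this] X
  show "psd (n * dB) (id_tensor n dC dB (choi_map dC dB W) X)"
    unfolding psd_iff_psd_kernel psd_kernel_def by (auto simp: id_tensor_def intro: sum_nonneg)
qed

lemma msum_cong: "(\<And>l. l \<in> L \<Longrightarrow> f l = g l) \<Longrightarrow> msum r c f L = msum r c g L"
  unfolding msum_def by (auto intro!: sum.cong)

lemma msum_mono_neutral_right:
  assumes "finite L" "K \<subseteq> L" "\<And>l. l \<in> L - K \<Longrightarrow> f l = 0\<^sub>m r c"
  shows "msum r c f L = msum r c f K"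
proof -
  have "(\<Sum>l\<in>L. f l $$ (i, j)) = (\<Sum>l\<in>K. f l $$ (i, j))" if "i < r" "j < c" for i j
    by (rule sum.mono_neutral_right) (use assms that in auto)
  thus ?thesis unfolding msum_def by (intro cong_mat) auto
qed

lemma prod_A_BC_index:
  assumes "c < dC" "c' < dC" "y < dA * dB" "y' < dA * dB"
  shows "prod_A_BC dA dB dC \<tau> \<omega> $$ (c * (dA * dB) + y, c' * (dA * dB) + y') =
     \<tau> $$ (y div dB, y' div dB) * \<omega> $$ (c * dB + y mod dB, c' * dB + y' mod dB)"
proof -
  have "(c * (dA * dB) + y) mod dB = y mod dB" for c y :: nat
  proof -
    have "c * (dA * dB) + y = y + c * dA * dB" by (simp add: algebra_simps)
    thus ?thesis by (simp only: mod_mult_self1)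
  qed
  moreover have "dA * dB > 0" using assms(3) by (metis gr_zeroI less_nat_zero_code)
  ultimately show ?thesis using assms unfolding prod_A_BC_def by (simp add: mult_index_less Let_def)
qed

lemma prod_A_BC_dims [simp]:
  "dim_row (prod_A_BC dA dB dC \<tau> \<omega>) = dC * (dA * dB)" "dim_col (prod_A_BC dA dB dC \<tau> \<omega>) = dC * (dA * dB)"
  unfolding prod_A_BC_def by simp_all

lemma prod_A_BC_smult:
  assumes "\<omega> \<in> carrier_mat (dC * dB) (dC * dB)"
  shows "prod_A_BC dA dB dC \<tau> (a \<cdot>\<^sub>m \<omega>) = a \<cdot>\<^sub>m prod_A_BC dA dB dC \<tau> \<omega>"
proof (rule eq_matI)
  fix r s assume "r < dim_row (a \<cdot>\<^sub>m prod_A_BC dA dB dC \<tau> \<omega>)" "s < dim_col (a \<cdot>\<^sub>m prod_A_BC dA dB dC \<tau> \<omega>)"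
  hence rs: "r < dC * (dA * dB)" "s < dC * (dA * dB)" unfolding prod_A_BC_def by auto
  obtain c y where cy: "c < dC" "y < dA * dB" "r = c * (dA * dB) + y"
    using mult_index_cases[OF rs(1)] .
  obtain c' y' where cy': "c' < dC" "y' < dA * dB" "s = c' * (dA * dB) + y'"
    using mult_index_cases[OF rs(2)] .
  have "dB > 0" using cy(2) by (metis mult_0_right not_gr0 not_less_zero)
  hence "c * dB + y mod dB < dC * dB" "c' * dB + y' mod dB < dC * dB"
    using cy cy' by (auto intro: mult_index_less)
  moreover have "(a \<cdot>\<^sub>m prod_A_BC dA dB dC \<tau> \<omega>) $$ (r, s) = a * prod_A_BC dA dB dC \<tau> \<omega> $$ (r, s)"
    using rs by (simp add: prod_A_BC_def)
  ultimately show "prod_A_BC dA dB dC \<tau> (a \<cdot>\<^sub>m \<omega>) $$ (r, s) = (a \<cdot>\<^sub>m prod_A_BC dA dB dC \<tau> \<omega>) $$ (r, s)"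
    using assms cy cy' by (simp add: prod_A_BC_index)
qed (simp_all add: prod_A_BC_def)

lemma prod_A_BC_zero: "prod_A_BC dA dB dC \<tau> (0\<^sub>m (dC * dB) (dC * dB)) = 0\<^sub>m (dC * (dA * dB)) (dC * (dA * dB))"
proof -
  have "prod_A_BC dA dB dC \<tau> (0\<^sub>m (dC * dB) (dC * dB)) = prod_A_BC dA dB dC \<tau> (0 \<cdot>\<^sub>m 0\<^sub>m (dC * dB) (dC * dB))"
    by (rule arg_cong[where f = "prod_A_BC dA dB dC \<tau>"]) (intro eq_matI; simp)
  also have "\<dots> = 0 \<cdot>\<^sub>m prod_A_BC dA dB dC \<tau> (0\<^sub>m (dC * dB) (dC * dB))"
    by (rule prod_A_BC_smult) simp
  also have "\<dots> = 0\<^sub>m (dC * (dA * dB)) (dC * (dA * dB))"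
    by (intro eq_matI) (simp_all add: prod_A_BC_def)
  finally show ?thesis .
qed

lemma choi_msum_kron:
  assumes lin: "\<And>l. l \<in> L \<Longrightarrow> lin_map dC dB (\<Lambda>s l)"
    and \<sigma>: "\<And>l. l \<in> L \<Longrightarrow> \<sigma> l \<in> carrier_mat dA dA"
    and \<Lambda>: "\<forall>X \<in> carrier_mat dC dC. \<Lambda> X = msum (dA * dB) (dA * dB) (\<lambda>l. kron (\<sigma> l) (\<Lambda>s l X)) L"
  shows "choi dC (dA * dB) \<Lambda> =
    msum (dC * (dA * dB)) (dC * (dA * dB)) (\<lambda>l. prod_A_BC dA dB dC (\<sigma> l) (choi dC dB (\<Lambda>s l))) L"
proof (rule eq_matI)
  let ?N = "dC * (dA * dB)"
  fix r s assume "r < dim_row (msum ?N ?N (\<lambda>l. prod_A_BC dA dB dC (\<sigma> l) (choi dC dB (\<Lambda>s l))) L)"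
    "s < dim_col (msum ?N ?N (\<lambda>l. prod_A_BC dA dB dC (\<sigma> l) (choi dC dB (\<Lambda>s l))) L)"
  hence rs: "r < ?N" "s < ?N" by auto
  obtain c y where c: "c < dC" "y < dA * dB" "r = c * (dA * dB) + y" using mult_index_cases[OF rs(1)] .
  obtain c' y' where c': "c' < dC" "y' < dA * dB" "s = c' * (dA * dB) + y'" using mult_index_cases[OF rs(2)] .
  have "dB > 0" using c(2) by (metis mult_0_right not_gr0 not_less_zero)
  hence ym: "y mod dB < dB" "y' mod dB < dB" by auto
  have \<Lambda>s: "\<Lambda>s l (blk dC (max_ent dC) c c') \<in> carrier_mat dB dB" if "l \<in> L" for l
    using lin[OF that] unfolding lin_map_def by simp
  have "choi dC (dA * dB) \<Lambda> $$ (r, s) = \<Lambda> (blk dC (max_ent dC) c c') $$ (y, y')"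
    unfolding c(3) c'(3) by (rule choi_index[OF c(1) c'(1) c(2) c'(2)])
  also have "\<dots> = (\<Sum>l\<in>L. \<sigma> l $$ (y div dB, y' div dB) * \<Lambda>s l (blk dC (max_ent dC) c c') $$ (y mod dB, y' mod dB))"
    using \<Lambda> c(2) c'(2) by (simp add: kron_index[OF \<sigma> \<Lambda>s])
  also have "\<dots> = (\<Sum>l\<in>L. prod_A_BC dA dB dC (\<sigma> l) (choi dC dB (\<Lambda>s l)) $$ (r, s))"
    unfolding c(3) c'(3) prod_A_BC_index[OF c(1) c'(1) c(2) c'(2)] choi_index[OF c(1) c'(1) ym] ..
  finally show "choi dC (dA * dB) \<Lambda> $$ (r, s) = msum ?N ?N (\<lambda>l. prod_A_BC dA dB dC (\<sigma> l) (choi dC dB (\<Lambda>s l))) L $$ (r, s)"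
    using rs by simp
qed (simp_all add: choi_def id_tensor_def)

lemma instrument_mtrace_choi_sum:
  assumes inst: "instrument dC dB L \<Lambda>s" and "dC > 0"
  shows "(\<Sum>l\<in>L. mtrace (choi dC dB (\<Lambda>s l))) = 1"
proof -
  let ?E = "\<lambda>c. blk dC (max_ent dC) c c"
  have lin: "lin_map dC dB (\<Lambda>s l)" if "l \<in> L" for l
    using inst that unfolding instrument_def completely_positive_def by auto
  have tp: "mtrace (msum dB dB (\<lambda>l. \<Lambda>s l X) L) = mtrace X" if "X \<in> carrier_mat dC dC" for X
    using inst that unfolding instrument_def channel_def by auto
  have "(\<Sum>l\<in>L. mtrace (choi dC dB (\<Lambda>s l))) = (\<Sum>l\<in>L. \<Sum>c<dC. mtrace (\<Lambda>s l (?E c)))"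
    by (intro sum.cong refl mtrace_choi lin)
  also have "\<dots> = (\<Sum>c<dC. \<Sum>l\<in>L. mtrace (\<Lambda>s l (?E c)))" by (rule sum.swap)
  also have "\<dots> = (\<Sum>c<dC. mtrace (msum dB dB (\<lambda>l. \<Lambda>s l (?E c)) L))"
    using lin by (intro sum.cong refl mtrace_msum[symmetric]) (auto simp: lin_map_def)
  also have "\<dots> = (\<Sum>c<dC. 1 / of_nat dC)" by (intro sum.cong refl) (simp add: tp mtrace_blk_max_ent)
  finally show ?thesis using assms(2) by simp
qed

lemma separable_A_BC_msum_psd:
  fixes L :: "nat set"
  assumes "finite L"
    and \<sigma>: "\<And>l. l \<in> L \<Longrightarrow> density dA (\<sigma> l)"
    and J: "\<And>l. l \<in> L \<Longrightarrow> psd (dC * dB) (J l)"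
    and tr: "(\<Sum>l\<in>L. mtrace (J l)) = 1"
  shows "separable_A_BC dA dB dC
    (msum (dC * (dA * dB)) (dC * (dA * dB)) (\<lambda>l. prod_A_BC dA dB dC (\<sigma> l) (J l)) L)"
proof -
  let ?N = "dC * (dA * dB)"
  define K where "K = {l \<in> L. mtrace (J l) \<noteq> 0}"
  define p where "p = (\<lambda>l. Re (mtrace (J l)))"
  define \<omega> where "\<omega> = (\<lambda>l. (1 / mtrace (J l)) \<cdot>\<^sub>m J l)"
  have "finite K" "K \<subseteq> L" using assms(1) unfolding K_def by auto
  have J_carrier: "J l \<in> carrier_mat (dC * dB) (dC * dB)" if "l \<in> L" for l
    using J[OF that] unfolding psd_def by simp
  have p: "mtrace (J l) = complex_of_real (p l)" "p l \<ge> 0" if "l \<in> L" for l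
    using psd_mtrace_nonneg[OF J[OF that]] unfolding p_def by (auto simp: less_eq_complex_def complex_eq_iff)
  \<comment> \<open>Summands whose J has trace zero vanish; the others are renormalised to density operators.\<close>
  have "msum ?N ?N (\<lambda>l. prod_A_BC dA dB dC (\<sigma> l) (J l)) L = msum ?N ?N (\<lambda>l. prod_A_BC dA dB dC (\<sigma> l) (J l)) K"
  proof (rule msum_mono_neutral_right[OF assms(1) \<open>K \<subseteq> L\<close>])
    fix l assume "l \<in> L - K"
    hence "J l = 0\<^sub>m (dC * dB) (dC * dB)" using psd_mtrace_zero[OF J] unfolding K_def by blast
    thus "prod_A_BC dA dB dC (\<sigma> l) (J l) = 0\<^sub>m ?N ?N" by (simp add: prod_A_BC_zero)
  qed
  also have "\<dots> = msum ?N ?N (\<lambda>k. complex_of_real (p k) \<cdot>\<^sub>m prod_A_BC dA dB dC (\<sigma> k) (\<omega> k)) K"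
  proof (rule msum_cong)
    fix k assume k: "k \<in> K"
    hence "J k = complex_of_real (p k) \<cdot>\<^sub>m \<omega> k"
      using \<open>K \<subseteq> L\<close> p J_carrier unfolding \<omega>_def K_def by (intro eq_matI) auto
    hence "prod_A_BC dA dB dC (\<sigma> k) (J k) = prod_A_BC dA dB dC (\<sigma> k) (complex_of_real (p k) \<cdot>\<^sub>m \<omega> k)"
      by (rule arg_cong)
    also have "\<dots> = complex_of_real (p k) \<cdot>\<^sub>m prod_A_BC dA dB dC (\<sigma> k) (\<omega> k)"
      by (rule prod_A_BC_smult) (use k \<open>K \<subseteq> L\<close> J_carrier in \<open>auto simp: \<omega>_def\<close>)
    finally show "prod_A_BC dA dB dC (\<sigma> k) (J k) = complex_of_real (p k) \<cdot>\<^sub>m prod_A_BC dA dB dC (\<sigma> k) (\<omega> k)" .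
  qed
  finally have decomp: "msum ?N ?N (\<lambda>l. prod_A_BC dA dB dC (\<sigma> l) (J l)) L
    = msum ?N ?N (\<lambda>k. complex_of_real (p k) \<cdot>\<^sub>m prod_A_BC dA dB dC (\<sigma> k) (\<omega> k)) K" .
  have "(\<Sum>k\<in>K. p k) = 1"
  proof -
    have "(\<Sum>l\<in>L. mtrace (J l)) = (\<Sum>l\<in>K. mtrace (J l))"
      using \<open>K \<subseteq> L\<close> by (intro sum.mono_neutral_right[OF assms(1)]) (auto simp: K_def)
    moreover have "(\<Sum>k\<in>K. p k) = Re (\<Sum>k\<in>K. mtrace (J k))" unfolding p_def by (simp add: Re_sum)
    ultimately show ?thesis using tr by simp
  qed
  moreover have "density (dC * dB) (\<omega> k)" if "k \<in> K" for k
    using that J density_inverse_mtrace_smult unfolding K_def \<omega>_def by blast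
  ultimately have props: "finite K \<and> (\<forall>k\<in>K. p k \<ge> 0) \<and> (\<Sum>k\<in>K. p k) = 1 \<and>
      (\<forall>k\<in>K. density dA (\<sigma> k) \<and> density (dC * dB) (\<omega> k))"
    using \<open>finite K\<close> \<open>K \<subseteq> L\<close> p \<sigma> by auto
  show ?thesis unfolding separable_A_BC_def decomp
    by (rule exI[of _ K], rule exI[of _ p], rule exI[of _ \<sigma>], rule exI[of _ \<omega>]) (use props in simp)
qed

lemma choi_separable_if_incoherent_extension:
  assumes "dC > 0" and inc: "incoherent_extension dA dB dC \<Lambda>"
  shows "separable_A_BC dA dB dC (choi dC (dA * dB) \<Lambda>)"
proof -
  obtain L :: "nat set" and \<Lambda>s \<sigma> where inst: "instrument dC dB L \<Lambda>s"
    and \<sigma>: "\<forall>l\<in>L. density dA (\<sigma> l)"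
    and \<Lambda>: "\<forall>X \<in> carrier_mat dC dC. \<Lambda> X = msum (dA * dB) (dA * dB) (\<lambda>l. kron (\<sigma> l) (\<Lambda>s l X)) L"
    using inc unfolding incoherent_extension_def by blast
  have cp: "completely_positive dC dB (\<Lambda>s l)" if "l \<in> L" for l
    using inst that unfolding instrument_def by auto
  have "choi dC (dA * dB) \<Lambda> =
      msum (dC * (dA * dB)) (dC * (dA * dB)) (\<lambda>l. prod_A_BC dA dB dC (\<sigma> l) (choi dC dB (\<Lambda>s l))) L"
    using cp \<sigma> \<Lambda> by (intro choi_msum_kron) (auto simp: completely_positive_def density_carrier)
  also have "separable_A_BC dA dB dC \<dots>"
    using inst \<sigma> cp choi_psd instrument_mtrace_choi_sum[OF inst assms(1)] assms(1)
    by (intro separable_A_BC_msum_psd) (auto simp: instrument_def)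
  finally show ?thesis .
qed

lemma lin_map_eq_msum_kron_choi_map:
  assumes lin: "lin_map dC (dA * dB) \<Lambda>"
    and \<tau>: "\<And>k. k \<in> K \<Longrightarrow> \<tau> k \<in> carrier_mat dA dA"
    and \<omega>: "\<And>k. k \<in> K \<Longrightarrow> \<omega> k \<in> carrier_mat (dC * dB) (dC * dB)"
    and \<rho>: "choi dC (dA * dB) \<Lambda> = msum (dC * (dA * dB)) (dC * (dA * dB))
      (\<lambda>k. complex_of_real (p k) \<cdot>\<^sub>m prod_A_BC dA dB dC (\<tau> k) (\<omega> k)) K"
    and X: "X \<in> carrier_mat dC dC"
  shows "\<Lambda> X = msum (dA * dB) (dA * dB)
    (\<lambda>k. kron (\<tau> k) (choi_map dC dB (complex_of_real (real dC * p k) \<cdot>\<^sub>m \<omega> k) X)) K"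
proof (rule eq_matI)
  let ?Y = "dA * dB"
  let ?\<Lambda>s = "\<lambda>k. choi_map dC dB (complex_of_real (real dC * p k) \<cdot>\<^sub>m \<omega> k) X"
  fix y y' assume "y < dim_row (msum ?Y ?Y (\<lambda>k. kron (\<tau> k) (?\<Lambda>s k)) K)"
    "y' < dim_col (msum ?Y ?Y (\<lambda>k. kron (\<tau> k) (?\<Lambda>s k)) K)"
  hence yy: "y < ?Y" "y' < ?Y" by auto
  have "dB > 0" using yy(1) by (metis mult_0_right not_gr0 not_less_zero)
  hence ym: "y mod dB < dB" "y' mod dB < dB" by auto
  define t where "t k c c' = complex_of_real (p k) *
    (\<tau> k $$ (y div dB, y' div dB) * \<omega> k $$ (c * dB + y mod dB, c' * dB + y' mod dB))" for k c c'
  have choi_entry: "choi dC ?Y \<Lambda> $$ (c * ?Y + y, c' * ?Y + y') = (\<Sum>k\<in>K. t k c c')"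
    if "c < dC" "c' < dC" for c c'
    unfolding \<rho> using that yy by (simp add: mult_index_less prod_A_BC_index t_def)
  have kron_entry: "kron (\<tau> k) (?\<Lambda>s k) $$ (y, y') = (\<Sum>c<dC. \<Sum>c'<dC. X $$ (c, c') * of_nat dC * t k c c')"
    if k: "k \<in> K" for k
  proof -
    have "kron (\<tau> k) (?\<Lambda>s k) $$ (y, y') = \<tau> k $$ (y div dB, y' div dB) * ?\<Lambda>s k $$ (y mod dB, y' mod dB)"
      by (rule kron_index[OF \<tau>[OF k] _ yy]) (simp add: choi_map_def)
    also have "\<dots> = \<tau> k $$ (y div dB, y' div dB) * (\<Sum>c<dC. \<Sum>c'<dC. X $$ (c, c') *
        (complex_of_real (real dC * p k) * \<omega> k $$ (c * dB + y mod dB, c' * dB + y' mod dB)))"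
    proof -
      have "dim_row (\<omega> k) = dC * dB" "dim_col (\<omega> k) = dC * dB" using \<omega>[OF k] by auto
      thus ?thesis using ym unfolding choi_map_def by (simp add: mult_index_less)
    qed
    also have "\<dots> = (\<Sum>c<dC. \<Sum>c'<dC. X $$ (c, c') * of_nat dC * t k c c')"
      unfolding t_def by (simp add: sum_distrib_left algebra_simps)
    finally show ?thesis .
  qed
  have "\<Lambda> X $$ (y, y') = (\<Sum>c<dC. \<Sum>c'<dC. X $$ (c, c') * of_nat dC * (\<Sum>k\<in>K. t k c c'))"
    using lin_map_eq_choi_sum[OF lin X yy] choi_entry by simp
  also have "\<dots> = (\<Sum>c<dC. \<Sum>c'<dC. \<Sum>k\<in>K. X $$ (c, c') * of_nat dC * t k c c')"
    by (simp add: sum_distrib_left)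
  also have "\<dots> = (\<Sum>k\<in>K. \<Sum>c<dC. \<Sum>c'<dC. X $$ (c, c') * of_nat dC * t k c c')"
    by (simp only: sum.swap[where A = "{..<dC}" and B = K])
  also have "\<dots> = (\<Sum>k\<in>K. kron (\<tau> k) (?\<Lambda>s k) $$ (y, y'))"
    by (intro sum.cong refl) (simp only: kron_entry)
  also have "\<dots> = msum ?Y ?Y (\<lambda>k. kron (\<tau> k) (?\<Lambda>s k)) K $$ (y, y')"
    using yy by simp
  finally show "\<Lambda> X $$ (y, y') = msum ?Y ?Y (\<lambda>k. kron (\<tau> k) (?\<Lambda>s k)) K $$ (y, y')" .
qed (use lin X in \<open>auto simp: lin_map_def\<close>)

lemma ptrace_first_msum_kron:
  assumes \<tau>: "\<And>k. k \<in> K \<Longrightarrow> density dA (\<tau> k)" and M: "\<And>k. k \<in> K \<Longrightarrow> M k \<in> carrier_mat dB dB"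
  shows "ptrace_first dA dB (msum (dA * dB) (dA * dB) (\<lambda>k. kron (\<tau> k) (M k)) K) = msum dB dB M K"
proof (rule eq_matI)
  fix b b' assume "b < dim_row (msum dB dB M K)" "b' < dim_col (msum dB dB M K)"
  hence bb: "b < dB" "b' < dB" by auto
  have tr: "(\<Sum>a<dA. \<tau> k $$ (a, a)) = 1" if "k \<in> K" for k
    using \<tau>[OF that] density_carrier[OF \<tau>[OF that]] unfolding density_def mtrace_def by auto
  have "ptrace_first dA dB (msum (dA * dB) (dA * dB) (\<lambda>k. kron (\<tau> k) (M k)) K) $$ (b, b')
      = (\<Sum>a<dA. \<Sum>k\<in>K. \<tau> k $$ (a, a) * M k $$ (b, b'))"
    unfolding ptrace_first_def using bb
    by (simp add: mult_index_less kron_index[OF density_carrier[OF \<tau>] M])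
  also have "\<dots> = (\<Sum>k\<in>K. (\<Sum>a<dA. \<tau> k $$ (a, a)) * M k $$ (b, b'))"
    by (subst sum.swap) (simp add: sum_distrib_right)
  also have "\<dots> = msum dB dB M K $$ (b, b')" using bb by (simp add: tr)
  finally show "ptrace_first dA dB (msum (dA * dB) (dA * dB) (\<lambda>k. kron (\<tau> k) (M k)) K) $$ (b, b')
      = msum dB dB M K $$ (b, b')" .
qed (simp_all add: ptrace_first_def)

lemma incoherent_extension_if_choi_separable:
  assumes "dC > 0" and ext: "channel_extension dA dB dC \<Lambda> \<Lambda>B"
    and sep: "separable_A_BC dA dB dC (choi dC (dA * dB) \<Lambda>)"
  shows "incoherent_extension dA dB dC \<Lambda>"
proof -
  obtain K :: "nat set" and p \<tau> \<omega> where "finite K" and p: "\<forall>k\<in>K. p k \<ge> 0"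
    and dens: "\<forall>k\<in>K. density dA (\<tau> k) \<and> density (dC * dB) (\<omega> k)"
    and \<rho>: "choi dC (dA * dB) \<Lambda> = msum (dC * (dA * dB)) (dC * (dA * dB))
      (\<lambda>k. complex_of_real (p k) \<cdot>\<^sub>m prod_A_BC dA dB dC (\<tau> k) (\<omega> k)) K"
    using sep unfolding separable_A_BC_def by blast
  define \<Lambda>s where "\<Lambda>s k = choi_map dC dB (complex_of_real (real dC * p k) \<cdot>\<^sub>m \<omega> k)" for k
  have lin: "lin_map dC (dA * dB) \<Lambda>" and "channel dC dB \<Lambda>B"
    and ptrace: "\<And>X. X \<in> carrier_mat dC dC \<Longrightarrow> ptrace_first dA dB (\<Lambda> X) = \<Lambda>B X"
    using ext unfolding channel_extension_def channel_def completely_positive_def by auto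
  have \<Lambda>: "\<forall>X \<in> carrier_mat dC dC. \<Lambda> X = msum (dA * dB) (dA * dB) (\<lambda>k. kron (\<tau> k) (\<Lambda>s k X)) K"
  proof
    fix X :: "complex mat" assume X: "X \<in> carrier_mat dC dC"
    show "\<Lambda> X = msum (dA * dB) (dA * dB) (\<lambda>k. kron (\<tau> k) (\<Lambda>s k X)) K"
      unfolding \<Lambda>s_def by (rule lin_map_eq_msum_kron_choi_map[OF lin _ _ \<rho> X]) (use dens in \<open>auto intro: density_carrier\<close>)
  qed
  have "\<Lambda>B X = msum dB dB (\<lambda>k. \<Lambda>s k X) K" if X: "X \<in> carrier_mat dC dC" for X
  proof -
    have "\<Lambda>B X = ptrace_first dA dB (msum (dA * dB) (dA * dB) (\<lambda>k. kron (\<tau> k) (\<Lambda>s k X)) K)"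
      using ptrace[OF X] \<Lambda> X by simp
    also have "\<dots> = msum dB dB (\<lambda>k. \<Lambda>s k X) K"
      by (rule ptrace_first_msum_kron) (use dens in \<open>auto simp: \<Lambda>s_def choi_map_def\<close>)
    finally show ?thesis .
  qed
  hence "channel dC dB (\<lambda>X. msum dB dB (\<lambda>k. \<Lambda>s k X) K)"
    by (intro channel_cong[OF _ \<open>channel dC dB \<Lambda>B\<close>]) simp
  moreover have "completely_positive dC dB (\<Lambda>s k)" if "k \<in> K" for k
    unfolding \<Lambda>s_def using p dens that
    by (intro completely_positive_choi_map psd_smult) (auto simp: density_def)
  ultimately have "instrument dC dB K \<Lambda>s" unfolding instrument_def using \<open>finite K\<close> by blast
  thus ?thesis unfolding incoherent_extension_def
    by (intro exI[of _ K] exI[of _ \<Lambda>s] exI[of _ \<tau>]) (use dens \<Lambda> in auto)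
qed

theorem theorem2:
  fixes dA dB dC :: nat
    and \<Lambda>AB \<Lambda>B :: "complex mat \<Rightarrow> complex mat"
  assumes "dA > 0" and "dB > 0" and "dC > 0"
    and "channel_extension dA dB dC \<Lambda>AB \<Lambda>B"
  shows "incoherent_extension dA dB dC \<Lambda>AB \<longleftrightarrow> separable_A_BC dA dB dC (choi dC (dA * dB) \<Lambda>AB)"
  using choi_separable_if_incoherent_extension[OF assms(3)]
    incoherent_extension_if_choi_separable[OF assms(3,4)] by blast

end
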